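(* Let $\Pi$ be a $3$-decomposable $30$-half-period with classes $A,B,C$. Then $N_k^{bi}(\Pi)=30$ for $k=11,12,13,14$.
   Context: An allowable sequence on an $n$-element set is a doubly infinite sequence of permutations of the set (lists on positions $1,\dots,n$) in which consecutive permutations differ by swapping two adjacent elements (a transposition) and $\pi_{i+\binom n2}$ is the reverse of $\pi_i$; an $n$-half-period is a block $(\pi_0,\dots,\pi_{\binom n2})$ of consecutive permutations (each pair of elements is swapped exactly once in it). A transposition swapping the elements in positions $i,i+1$ is an $i$-transposition; for $1\le k\le n/2$ it is $k$-critical if it is a $k$-transposition or an $(n-k)$-transposition. An $n$-half-period $\Pi$ ($3\mid n$) is $3$-decomposable if its elements can be labeled $A=\{a_1,\dots,a_{n/3}\}$, $B=\{b_1,\dots,b_{n/3}\}$, $C=\{c_1,\dots,c_{n/3}\}$ so that its first permutation is $(a_{n/3},\dots,a_1,b_1,\dots,b_{n/3},c_1,\dots,c_{n/3})$, every transposition between an element of $A$ and an element of $B$ occurs before every transposition between an element of $C$ and an element of $A\cup B$, and every transposition between $A$ and $C$ occurs before every transposition between $B$ and $C$. A transposition is bichromatic if its two elements lie in different classes among $A,B,C$. $N_k^{bi}(\Pi)$ is the number of bichromatic $k$-critical transpositions of $\Pi$. *)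

theory Defs
  imports Main
begin

text \<open>Permutations of an n-element set are lists of n distinct elements (positions 0..n-1
  in Isabelle, i.e. positions 1..n of the paper shifted by one).\<close>

definition adj_swap :: "'a list \<Rightarrow> nat \<Rightarrow> 'a list" where
  "adj_swap xs j = xs[j := xs ! Suc j, Suc j := xs ! j]"

text \<open>0-based position j of the transposition performed between P!s and P!(s+1);
  it swaps the paper's positions j+1, j+2, i.e. it is a (j+1)-transposition.\<close>
definition swap_pos :: "'a list list \<Rightarrow> nat \<Rightarrow> nat" where
  "swap_pos P s = (THE j. Suc j < length (P ! s) \<and> P ! Suc s = adj_swap (P ! s) j)"

definition swapped :: "'a list list \<Rightarrow> nat \<Rightarrow> 'a set" where
  "swapped P s = {P ! s ! swap_pos P s, P ! s ! Suc (swap_pos P s)}"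

definition half_period :: "nat \<Rightarrow> 'a list list \<Rightarrow> bool" where
  "half_period n P \<longleftrightarrow>
     length P = (n choose 2) + 1 \<and>
     (\<forall>\<pi>\<in>set P. distinct \<pi> \<and> length \<pi> = n) \<and>
     (\<forall>s < n choose 2. \<exists>j. Suc j < n \<and> P ! Suc s = adj_swap (P ! s) j) \<and>
     (\<forall>x\<in>set (P ! 0). \<forall>y\<in>set (P ! 0). x \<noteq> y \<longrightarrow>
        card {s. s < n choose 2 \<and> swapped P s = {x, y}} = 1)"

definition between :: "'a set \<Rightarrow> 'a set \<Rightarrow> 'a set \<Rightarrow> bool" where
  "between X Y e \<longleftrightarrow> (\<exists>x\<in>X. \<exists>y\<in>Y. e = {x, y})"

definition three_decomposable :: "nat \<Rightarrow> 'a list list \<Rightarrow> 'a set \<Rightarrow> 'a set \<Rightarrow> 'a set \<Rightarrow> bool" where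
  "three_decomposable n P A B C \<longleftrightarrow>
     3 dvd n \<and> half_period n P \<and>
     (\<exists>a b c :: nat \<Rightarrow> 'a.
        A = a ` {1..n div 3} \<and> B = b ` {1..n div 3} \<and> C = c ` {1..n div 3} \<and>
        P ! 0 = rev (map a [1..<n div 3 + 1]) @ map b [1..<n div 3 + 1] @ map c [1..<n div 3 + 1]) \<and>
     (\<forall>s < n choose 2. \<forall>t < n choose 2.
        between A B (swapped P s) \<and> between C (A \<union> B) (swapped P t) \<longrightarrow> s < t) \<and>
     (\<forall>s < n choose 2. \<forall>t < n choose 2.
        between A C (swapped P s) \<and> between B C (swapped P t) \<longrightarrow> s < t)"

text \<open>k-critical: a k-transposition or an (n-k)-transposition (1-based index = swap_pos + 1).\<close>
definition critical :: "nat \<Rightarrow> nat \<Rightarrow> 'a list list \<Rightarrow> nat \<Rightarrow> bool" where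
  "critical n k P s \<longleftrightarrow> Suc (swap_pos P s) = k \<or> Suc (swap_pos P s) = n - k"

definition bichromatic :: "'a set \<Rightarrow> 'a set \<Rightarrow> 'a set \<Rightarrow> 'a set \<Rightarrow> bool" where
  "bichromatic A B C e \<longleftrightarrow> \<not> (e \<subseteq> A \<or> e \<subseteq> B \<or> e \<subseteq> C)"

definition N_bi :: "nat \<Rightarrow> nat \<Rightarrow> 'a list list \<Rightarrow> 'a set \<Rightarrow> 'a set \<Rightarrow> 'a set \<Rightarrow> nat" where
  "N_bi n k P A B C =
     card {s. s < n choose 2 \<and> critical n k P s \<and> bichromatic A B C (swapped P s)}"

end

theory Submission imports Defs begin

text \<open>By the ordering hypotheses a 3-decomposable half-period runs in three phases: first all
  \<open>A\<close>--\<open>B\<close> swaps, then all \<open>A\<close>--\<open>C\<close> swaps, then all \<open>B\<close>--\<open>C\<close> swaps.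
  As every pair is swapped exactly once, the classes lie in blocks in the order \<open>ABC\<close> at the
  start, \<open>BAC\<close> after the first phase, \<open>BCA\<close> after the second and \<open>CBA\<close> at the end.
  In a phase where the elements of \<open>Y\<close> meet only each other and elements of \<open>X\<close> (initially
  to their left), an \<open>X\<close>--\<open>Y\<close> swap at position \<open>j\<close> moves a \<open>Y\<close>-element from
  \<open>j + 1\<close> to \<open>j\<close>; so the number of such swaps is the growth of the number of
  \<open>Y\<close>-elements in positions \<open>\<le> j\<close>, which the block layouts determine. For \<open>n = 3m\<close>
  and \<open>m \<le> j + 1 \<le> 2m\<close> this gives \<open>(2m-j-1) + (j+1-m) + (2m-j-1) = n-j-1\<close>
  bichromatic swaps at (0-based) position \<open>j\<close>, and the two critical positions \<open>k - 1\<close> and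
  \<open>n - k - 1\<close> together carry \<open>n\<close> of them.\<close>

lemma nth_adj_swap:
  assumes "Suc j < length xs" "i < length xs"
  shows "adj_swap xs j ! i = (if i = j then xs ! Suc j else if i = Suc j then xs ! j else xs ! i)"
  using assms by (auto simp: adj_swap_def nth_list_update)

lemma set_adj_swap: "Suc j < length xs \<Longrightarrow> set (adj_swap xs j) = set xs"
  by (simp add: adj_swap_def)

lemma adj_swap_inj:
  assumes "distinct xs" "Suc j < length xs" "Suc j' < length xs" "adj_swap xs j = adj_swap xs j'"
  shows "j = j'"
proof (rule ccontr)
  assume ne: "j \<noteq> j'"
  have "adj_swap xs j ! j = adj_swap xs j' ! j" using assms by simp
  hence "xs ! Suc j = (if j = Suc j' then xs ! j' else xs ! j)"
    using assms(1-3) ne by (simp add: nth_adj_swap)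
  moreover have "j = Suc j' \<Longrightarrow> xs ! Suc j \<noteq> xs ! j'" "xs ! Suc j \<noteq> xs ! j"
    using assms(1,2) by (simp_all add: nth_eq_iff_index_eq)
  ultimately show False by (cases "j = Suc j'") auto
qed

definition adj_transp :: "nat \<Rightarrow> nat \<Rightarrow> nat" where
  "adj_transp j i = (if i = j then Suc j else if i = Suc j then j else i)"

lemma adj_transp_less: "Suc j < n \<Longrightarrow> i < n \<Longrightarrow> adj_transp j i < n"
  by (simp add: adj_transp_def)

lemma nth_adj_swap_adj_transp:
  "Suc j < length xs \<Longrightarrow> i < length xs \<Longrightarrow> adj_swap xs j ! adj_transp j i = xs ! i"
  by (auto simp: adj_transp_def nth_adj_swap)

lemma adj_transp_le_iff: "J \<noteq> j \<Longrightarrow> adj_transp J i \<le> j \<longleftrightarrow> i \<le> j"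
  by (auto simp: adj_transp_def)

lemma adj_transp_less_iff:
  assumes "a \<noteq> b"
  shows "adj_transp j a < adj_transp j b \<longleftrightarrow> (a < b) \<noteq> ({a, b} = {j, Suc j})"
  using assms by (auto simp: adj_transp_def doubleton_eq_iff)

lemma between_commute_subset: "between X Y e \<Longrightarrow> X \<subseteq> Z \<Longrightarrow> between Y Z e"
  by (auto simp: between_def insert_commute)

lemma between_pair_iff:
  assumes "X \<inter> Y = {}" "u \<noteq> v"
  shows "between X Y {u, v} \<longleftrightarrow> (u \<in> X \<and> v \<in> Y) \<or> (u \<in> Y \<and> v \<in> X)"
  using assms by (auto simp: between_def doubleton_eq_iff)

lemma bichromatic_pair_iff:
  assumes "A \<inter> B = {}" "A \<inter> C = {}" "B \<inter> C = {}" "u \<in> A \<union> B \<union> C" "v \<in> A \<union> B \<union> C"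
  shows "bichromatic A B C {u, v} \<longleftrightarrow>
    between A B {u, v} \<or> between A C {u, v} \<or> between B C {u, v}"
  using assms unfolding between_def bichromatic_def by (auto simp: doubleton_eq_iff)

lemma between_exclusive:
  assumes "A \<inter> B = {}" "A \<inter> C = {}" "B \<inter> C = {}"
  shows "\<not> (between A B e \<and> between A C e)" "\<not> (between A B e \<and> between B C e)"
    "\<not> (between A C e \<and> between B C e)"
  using assms unfolding between_def by (auto simp: doubleton_eq_iff)

lemma initial_segment_eq_atLeastLessThan:
  fixes I J :: "nat set"
  assumes "I \<union> J = {0..<n}" "\<And>i j. i \<in> I \<Longrightarrow> j \<in> J \<Longrightarrow> i < j"
  shows "I = {0..<card I}"
proof -
  have "i < card I" if "i \<in> I" for i
  proof -
    have "{0..i} \<subseteq> I"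
    proof
      fix k assume "k \<in> {0..i}"
      moreover have "i < n" using assms(1) that by auto
      ultimately have "k \<in> I \<union> J" using assms(1) by auto
      moreover have "k \<notin> J" using assms(2)[OF that] \<open>k \<in> {0..i}\<close> by fastforce
      ultimately show "k \<in> I" by blast
    qed
    then have "card {0..i} \<le> card I"
      using card_mono[of I] assms(1) finite_subset[of I "{0..<n}"] by blast
    then show ?thesis by simp
  qed
  then have "I \<subseteq> {0..<card I}" by auto
  then show ?thesis using card_subset_eq[of "{0..<card I}" I] by simp
qed

locale half_period_seq =
  fixes P :: "'a list list" and n N :: nat
  assumes length_P: "length P = Suc N"
    and distinct_perm: "\<And>s. s \<le> N \<Longrightarrow> distinct (P ! s)"
    and length_perm: "\<And>s. s \<le> N \<Longrightarrow> length (P ! s) = n"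
    and adj_step: "\<And>s. s < N \<Longrightarrow> \<exists>j. Suc j < n \<and> P ! Suc s = adj_swap (P ! s) j"
    and swapped_once: "\<And>x y. x \<in> set (P ! 0) \<Longrightarrow> y \<in> set (P ! 0) \<Longrightarrow> x \<noteq> y \<Longrightarrow>
      card {s. s < N \<and> swapped P s = {x, y}} = 1"
begin

abbreviation "S \<equiv> set (P ! 0)"

lemma swap_pos_spec:
  assumes "s < N"
  shows "Suc (swap_pos P s) < n" "P ! Suc s = adj_swap (P ! s) (swap_pos P s)"
proof -
  obtain j where j: "Suc j < n" "P ! Suc s = adj_swap (P ! s) j" using adj_step[OF assms] by blast
  have unique: "j' = j" if "Suc j' < length (P ! s) \<and> P ! Suc s = adj_swap (P ! s) j'" for j'
    using adj_swap_inj[of "P ! s" j' j] j distinct_perm[of s] length_perm[of s] assms that by auto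
  have "swap_pos P s = j" unfolding swap_pos_def
  proof (rule the_equality)
    show "Suc j < length (P ! s) \<and> P ! Suc s = adj_swap (P ! s) j"
      using j length_perm[of s] assms by simp
  qed (fact unique)
  with j show "Suc (swap_pos P s) < n" "P ! Suc s = adj_swap (P ! s) (swap_pos P s)" by simp_all
qed

lemma set_perm: "s \<le> N \<Longrightarrow> set (P ! s) = S"
proof (induction s)
  case (Suc s)
  then have "s < N" by simp
  then have "set (P ! Suc s) = set (P ! s)"
    using swap_pos_spec[of s] set_adj_swap[of "swap_pos P s" "P ! s"] length_perm[of s] by simp
  with Suc show ?case by simp
qed simp

definition pos :: "nat \<Rightarrow> 'a \<Rightarrow> nat" where
  "pos s x = (THE i. i < n \<and> P ! s ! i = x)"

lemma pos_nth: "s \<le> N \<Longrightarrow> i < n \<Longrightarrow> pos s (P ! s ! i) = i"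
  unfolding pos_def
  by (rule the_equality) (use distinct_perm[of s] length_perm[of s] nth_eq_iff_index_eq in auto)

lemma
  assumes "s \<le> N" "x \<in> S"
  shows pos_less: "pos s x < n" and nth_pos: "P ! s ! pos s x = x"
proof -
  obtain i where "i < n" "P ! s ! i = x"
    using assms set_perm[of s] length_perm[of s] in_set_conv_nth[of x "P ! s"] by auto
  with pos_nth[OF assms(1)] show "pos s x < n" "P ! s ! pos s x = x" by auto
qed

lemma inj_on_pos: "s \<le> N \<Longrightarrow> inj_on (pos s) S"
  by (rule inj_onI) (metis nth_pos)

lemma pos_image: "s \<le> N \<Longrightarrow> pos s ` S = {0..<n}"
proof (intro antisym subsetI)
  fix i assume s: "s \<le> N" and "i \<in> {0..<n}"
  then have "i < n" by simp
  then have "P ! s ! i \<in> S" "pos s (P ! s ! i) = i"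
    using s nth_mem[of i "P ! s"] length_perm[of s] set_perm[of s] pos_nth[of s i] by auto
  then show "i \<in> pos s ` S" by (metis image_eqI)
qed (use pos_less in auto)

lemma card_S: "card S = n"
  using card_image[OF inj_on_pos[of 0]] pos_image[of 0] by simp

lemma swapped_elems:
  assumes "s < N"
  shows "P ! s ! swap_pos P s \<in> S" "P ! s ! Suc (swap_pos P s) \<in> S"
    "P ! s ! swap_pos P s \<noteq> P ! s ! Suc (swap_pos P s)"
proof -
  have "Suc (swap_pos P s) < length (P ! s)" "distinct (P ! s)" "set (P ! s) = S"
    using swap_pos_spec(1)[OF assms] length_perm[of s] distinct_perm[of s] set_perm[of s] assms
    by simp_all
  then show "P ! s ! swap_pos P s \<in> S" "P ! s ! Suc (swap_pos P s) \<in> S"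
    "P ! s ! swap_pos P s \<noteq> P ! s ! Suc (swap_pos P s)"
    by (metis Suc_lessD nth_mem, metis nth_mem, simp add: nth_eq_iff_index_eq)
qed

lemma pos_Suc: "s < N \<Longrightarrow> x \<in> S \<Longrightarrow> pos (Suc s) x = adj_transp (swap_pos P s) (pos s x)"
  using pos_nth[of "Suc s" "adj_transp (swap_pos P s) (pos s x)"] swap_pos_spec[of s]
    nth_adj_swap_adj_transp[of "swap_pos P s" "P ! s" "pos s x"] adj_transp_less
    length_perm[of s] pos_less[of s x] nth_pos[of s x]
  by simp

lemma swapped_iff_pos:
  assumes "s < N" "x \<in> S" "y \<in> S"
  shows "swapped P s = {x, y} \<longleftrightarrow> {pos s x, pos s y} = {swap_pos P s, Suc (swap_pos P s)}"
proof
  assume "swapped P s = {x, y}"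
  then have "{pos s x, pos s y} = pos s ` swapped P s" by simp
  also have "\<dots> = {swap_pos P s, Suc (swap_pos P s)}"
    using pos_nth[of s] swap_pos_spec(1)[OF assms(1)] assms(1) by (simp add: swapped_def)
  finally show "{pos s x, pos s y} = {swap_pos P s, Suc (swap_pos P s)}" .
next
  assume pos_xy: "{pos s x, pos s y} = {swap_pos P s, Suc (swap_pos P s)}"
  have "{x, y} = (!) (P ! s) ` {pos s x, pos s y}"
    using nth_pos[of s] assms by simp
  also have "\<dots> = swapped P s"
    unfolding pos_xy by (simp add: swapped_def)
  finally show "swapped P s = {x, y}" ..
qed

lemma order_Suc:
  assumes "s < N" "x \<in> S" "y \<in> S" "x \<noteq> y"
  shows "(pos (Suc s) x < pos (Suc s) y) \<longleftrightarrow> (pos s x < pos s y) \<noteq> (swapped P s = {x, y})"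
proof -
  have "pos s x \<noteq> pos s y" using nth_pos[of s x] nth_pos[of s y] assms by force
  then show ?thesis
    using pos_Suc[OF assms(1)] adj_transp_less_iff swapped_iff_pos[OF assms(1-3)] assms(2,3)
    by simp
qed

definition swap_time :: "'a \<Rightarrow> 'a \<Rightarrow> nat" where
  "swap_time x y = (THE s. s < N \<and> swapped P s = {x, y})"

lemma swap_time:
  assumes "x \<in> S" "y \<in> S" "x \<noteq> y"
  shows "swap_time x y < N" "swapped P (swap_time x y) = {x, y}"
    and swap_time_unique: "s < N \<Longrightarrow> swapped P s = {x, y} \<Longrightarrow> s = swap_time x y"
proof -
  obtain s0 where s0: "{s. s < N \<and> swapped P s = {x, y}} = {s0}"
    using swapped_once[OF assms] by (metis card_1_singletonE)
  then have "swap_time x y = s0" unfolding swap_time_def by (intro the_equality) blast+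
  with s0 show "swap_time x y < N" "swapped P (swap_time x y) = {x, y}"
    "s < N \<Longrightarrow> swapped P s = {x, y} \<Longrightarrow> s = swap_time x y" by blast+
qed

lemma order_at:
  assumes "t \<le> N" "x \<in> S" "y \<in> S" "x \<noteq> y"
  shows "(pos t x < pos t y) \<longleftrightarrow> (pos 0 x < pos 0 y) \<noteq> (swap_time x y < t)"
  using assms(1)
proof (induction t)
  case (Suc t)
  then have t: "t < N" by simp
  have "swapped P t = {x, y} \<longleftrightarrow> swap_time x y = t"
  proof
    assume "swapped P t = {x, y}"
    then show "swap_time x y = t" using swap_time_unique[OF assms(2-4) t] by simp
  next
    assume "swap_time x y = t"
    then show "swapped P t = {x, y}" using swap_time(2)[OF assms(2-4)] by simp
  qed
  moreover have "swap_time x y < Suc t \<longleftrightarrow> (swap_time x y < t) \<noteq> (swap_time x y = t)"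
    by linarith
  ultimately show ?case
    using order_Suc[OF t assms(2-4)] Suc.IH t by simp blast
qed simp

lemma swap_orientation:
  assumes "s < N"
  shows "pos 0 (P ! s ! swap_pos P s) < pos 0 (P ! s ! Suc (swap_pos P s))"
proof -
  define j where "j = swap_pos P s"
  define u where "u = P ! s ! j"
  define v where "v = P ! s ! Suc j"
  have uv: "u \<in> S" "v \<in> S" "u \<noteq> v"
    using swapped_elems[OF assms] by (simp_all add: u_def v_def j_def)
  have "Suc j < n" using swap_pos_spec(1)[OF assms] by (simp add: j_def)
  then have "pos s u < pos s v"
    using pos_nth[of s j] pos_nth[of s "Suc j"] assms by (simp add: u_def v_def)
  moreover have "swap_time u v = s"
    using swap_time_unique[OF uv assms] by (simp add: swapped_def u_def v_def j_def)
  ultimately show ?thesis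
    using order_at[of s u v] uv assms by (simp add: u_def v_def j_def)
qed

lemma
  assumes "P ! 0 = xs @ ys"
  shows pos_append_left: "x \<in> set xs \<Longrightarrow> pos 0 x < length xs"
    and pos_append_right: "y \<in> set ys \<Longrightarrow> length xs \<le> pos 0 y"
proof -
  have len: "length xs + length ys = n" using length_perm[of 0] assms by simp
  show "pos 0 x < length xs" if x: "x \<in> set xs"
  proof -
    obtain i where "i < length xs" "xs ! i = x" using x by (auto simp: in_set_conv_nth)
    then show ?thesis using pos_nth[of 0 i] assms len by (simp add: nth_append)
  qed
  show "length xs \<le> pos 0 y" if y: "y \<in> set ys"
  proof -
    obtain i where "i < length ys" "ys ! i = y" using y by (auto simp: in_set_conv_nth)
    then show ?thesis using pos_nth[of 0 "length xs + i"] assms len by (simp add: nth_append)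
  qed
qed

definition precedes :: "nat \<Rightarrow> 'a set \<Rightarrow> 'a set \<Rightarrow> bool" where
  "precedes t X Y \<longleftrightarrow> (\<forall>x\<in>X. \<forall>y\<in>Y. pos t x < pos t y)"

lemma precedes_after_swaps:
  assumes "t \<le> N" "X \<subseteq> S" "Y \<subseteq> S" "X \<inter> Y = {}" "precedes 0 X Y"
    and "\<And>s. s < N \<Longrightarrow> between X Y (swapped P s) \<Longrightarrow> s < t"
  shows "precedes t Y X"
  unfolding precedes_def
proof (intro ballI)
  fix y x assume "y \<in> Y" "x \<in> X"
  then have xy: "x \<in> S" "y \<in> S" "x \<noteq> y" using assms(2-4) by auto
  have "between X Y (swapped P (swap_time y x))"
    using swap_time(2)[of y x] xy \<open>x \<in> X\<close> \<open>y \<in> Y\<close> by (auto simp: between_def)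
  then have "swap_time y x < t" using assms(6) swap_time(1)[of y x] xy by simp
  moreover have "pos 0 x < pos 0 y" using assms(5) \<open>x \<in> X\<close> \<open>y \<in> Y\<close>
    by (simp add: precedes_def)
  ultimately show "pos t y < pos t x" using order_at[OF assms(1), of y x] xy by simp
qed

lemma precedes_before_swaps:
  assumes "t \<le> N" "X \<subseteq> S" "Y \<subseteq> S" "X \<inter> Y = {}" "precedes 0 X Y"
    and "\<And>s. s < N \<Longrightarrow> between X Y (swapped P s) \<Longrightarrow> t \<le> s"
  shows "precedes t X Y"
  unfolding precedes_def
proof (intro ballI)
  fix x y assume "x \<in> X" "y \<in> Y"
  then have xy: "x \<in> S" "y \<in> S" "x \<noteq> y" using assms(2-4) by auto
  have "between X Y (swapped P (swap_time x y))"
    using swap_time(2)[of x y] xy \<open>x \<in> X\<close> \<open>y \<in> Y\<close> by (auto simp: between_def)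
  then have "t \<le> swap_time x y" using assms(6) swap_time(1)[of x y] xy by simp
  moreover have "pos 0 x < pos 0 y" using assms(5) \<open>x \<in> X\<close> \<open>y \<in> Y\<close>
    by (auto simp: precedes_def)
  ultimately show "pos t x < pos t y" using order_at[OF assms(1), of x y] xy by simp
qed

lemma pos_image_initial:
  assumes "t \<le> N" "X \<subseteq> S" "precedes t X (S - X)"
  shows "pos t ` X = {0..<card X}"
proof -
  have "pos t ` X \<union> pos t ` (S - X) = {0..<n}"
    using pos_image[OF assms(1)] assms(2) by (metis Diff_partition image_Un)
  then have "pos t ` X = {0..<card (pos t ` X)}"
    using assms(3) by (intro initial_segment_eq_atLeastLessThan) (auto simp: precedes_def)
  then show ?thesis
    using card_image[OF inj_on_subset[OF inj_on_pos[OF assms(1)] assms(2)]] by simp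
qed

lemma pos_image_blocks:
  assumes "t \<le> N" "S = U \<union> V \<union> W" "U \<inter> V = {}" "U \<inter> W = {}" "V \<inter> W = {}"
    and "precedes t U V" "precedes t U W" "precedes t V W"
  shows "pos t ` U = {0..<card U}" "pos t ` V = {card U..<card U + card V}"
    "pos t ` W = {card U + card V..<n}"
proof -
  have fin: "finite U" "finite V" using finite_set[of "P ! 0"] assms(2) by (metis finite_Un)+
  have inj: "inj_on (pos t) S" using inj_on_pos[OF assms(1)] .
  show U: "pos t ` U = {0..<card U}"
    using assms by (intro pos_image_initial) (auto simp: precedes_def)
  have "S - (U \<union> V) = W" using assms(2,4,5) by auto
  then have "precedes t (U \<union> V) (S - (U \<union> V))"
    using assms(7,8) by (auto simp: precedes_def)
  then have UV: "pos t ` (U \<union> V) = {0..<card U + card V}"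
    using pos_image_initial[OF assms(1)] assms(2) card_Un_disjoint[OF fin assms(3)] by simp
  have "V = (U \<union> V) - U" "W = S - (U \<union> V)" using assms(2-5) by auto
  then have V: "pos t ` V = pos t ` (U \<union> V) - pos t ` U"
    and W: "pos t ` W = pos t ` S - pos t ` (U \<union> V)"
    using inj_on_image_set_diff[OF inj] assms(2) by (metis Un_upper1 Diff_subset le_supI1)+
  show "pos t ` V = {card U..<card U + card V}" using V U UV by auto
  show "pos t ` W = {card U + card V..<n}" using W pos_image[OF assms(1)] UV by auto
qed

lemma card_pos_le:
  assumes "t \<le> N" "Y \<subseteq> S" "pos t ` Y = {lo..<hi}"
  shows "card {y\<in>Y. pos t y \<le> j} = min hi (Suc j) - lo"
proof -
  have "pos t ` {y\<in>Y. pos t y \<le> j} = {i \<in> pos t ` Y. i \<le> j}" by blast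
  also have "\<dots> = {lo..<min hi (Suc j)}" using assms(3) by auto
  finally have "pos t ` {y\<in>Y. pos t y \<le> j} = {lo..<min hi (Suc j)}" .
  moreover have "inj_on (pos t) {y\<in>Y. pos t y \<le> j}"
    by (rule inj_on_subset[OF inj_on_pos[OF assms(1)]]) (use assms(2) in auto)
  ultimately show ?thesis using card_image by fastforce
qed

lemma between_swapped_iff:
  assumes "s < N" "X \<inter> Y = {}" "precedes 0 X Y"
    and closed: "swapped P s \<inter> Y \<noteq> {} \<Longrightarrow> swapped P s \<subseteq> X \<union> Y"
  shows "between X Y (swapped P s) \<longleftrightarrow>
    P ! s ! swap_pos P s \<notin> Y \<and> P ! s ! Suc (swap_pos P s) \<in> Y"
    and right_in_phase_class: "P ! s ! swap_pos P s \<in> Y \<Longrightarrow> P ! s ! Suc (swap_pos P s) \<in> Y"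
proof -
  define u where "u = P ! s ! swap_pos P s"
  define v where "v = P ! s ! Suc (swap_pos P s)"
  have sw: "swapped P s = {u, v}" by (simp add: swapped_def u_def v_def)
  have "u \<noteq> v" using swapped_elems(3)[OF assms(1)] by (simp add: u_def v_def)
  have not_YX: "\<not> (u \<in> Y \<and> v \<in> X)"
  proof
    assume "u \<in> Y \<and> v \<in> X"
    then have "pos 0 v < pos 0 u" using assms(3) by (simp add: precedes_def)
    with swap_orientation[OF assms(1)] show False by (simp add: u_def v_def)
  qed
  have "u \<in> X" if "u \<notin> Y" "v \<in> Y" using closed that by (auto simp: sw)
  then show "between X Y (swapped P s) \<longleftrightarrow>
    P ! s ! swap_pos P s \<notin> Y \<and> P ! s ! Suc (swap_pos P s) \<in> Y"
    using assms(2) not_YX \<open>u \<noteq> v\<close>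
    by (auto simp: sw between_pair_iff u_def[symmetric] v_def[symmetric])
  show "P ! s ! Suc (swap_pos P s) \<in> Y" if "P ! s ! swap_pos P s \<in> Y"
    using closed not_YX that by (auto simp: sw u_def[symmetric] v_def[symmetric])
qed

lemma card_prefix_Suc:
  assumes "s < N" "Y \<subseteq> S" "X \<inter> Y = {}" "precedes 0 X Y"
    and closed: "swapped P s \<inter> Y \<noteq> {} \<Longrightarrow> swapped P s \<subseteq> X \<union> Y"
  shows "card {y\<in>Y. pos (Suc s) y \<le> j} =
    card {y\<in>Y. pos s y \<le> j} + (if swap_pos P s = j \<and> between X Y (swapped P s) then 1 else 0)"
proof -
  define J where "J = swap_pos P s"
  define u where "u = P ! s ! J"
  define v where "v = P ! s ! Suc J"
  define F where "F = {y\<in>Y. pos s y \<le> j}"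
  have "finite F" unfolding F_def using assms(2) finite_subset by fastforce
  have "Suc J < n" using swap_pos_spec(1)[OF assms(1)] by (simp add: J_def)
  then have pos_uv: "pos s u = J" "pos s v = Suc J"
    using pos_nth[of s] assms(1) by (simp_all add: u_def v_def)
  have pos_Suc_Y: "pos (Suc s) y = adj_transp J (pos s y)" if "y \<in> Y" for y
    using pos_Suc[OF assms(1)] that assms(2) by (auto simp: J_def)
  show ?thesis
  proof (cases "J = j")
    case False
    then have "{y\<in>Y. pos (Suc s) y \<le> j} = F"
      using pos_Suc_Y adj_transp_le_iff by (auto simp: F_def)
    with False show ?thesis by (simp add: F_def J_def)
  next
    case True
    have at_J: "pos s y = J \<longleftrightarrow> y = u" "pos s y = Suc J \<longleftrightarrow> y = v" if "y \<in> Y" for y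
      using nth_pos[of s y] pos_uv assms(1,2) that unfolding u_def v_def
      by (metis less_imp_le subsetD)+
    have "pos (Suc s) y \<le> J \<longleftrightarrow> (pos s y \<le> J \<and> y \<noteq> u) \<or> y = v" if "y \<in> Y" for y
      using pos_Suc_Y[OF that] at_J[OF that]
      by (cases "y = u"; cases "y = v") (simp_all add: adj_transp_def)
    then have new: "{y\<in>Y. pos (Suc s) y \<le> j} = (F - {u}) \<union> ({v} \<inter> Y)"
      using True by (auto simp: F_def)
    have "v \<notin> F" "u \<in> F \<longleftrightarrow> u \<in> Y" using pos_uv True by (auto simp: F_def)
    moreover have "u \<in> F \<Longrightarrow> 0 < card F" using \<open>finite F\<close> card_gt_0_iff by blast
    moreover have "between X Y (swapped P s) \<longleftrightarrow> u \<notin> Y \<and> v \<in> Y"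
      using between_swapped_iff[OF assms(1,3,4) closed] by (simp add: u_def v_def J_def)
    moreover have "u \<in> Y \<Longrightarrow> v \<in> Y"
      using right_in_phase_class[OF assms(1,3,4) closed] by (simp add: u_def v_def J_def)
    ultimately show ?thesis
      using \<open>finite F\<close> True unfolding new F_def[symmetric] J_def[symmetric]
      by (cases "u \<in> Y"; cases "v \<in> Y") (simp_all add: card_insert_if)
  qed
qed

lemma card_prefix_phase:
  assumes "s0 \<le> s1" "s1 \<le> N" "Y \<subseteq> S" "X \<inter> Y = {}" "precedes 0 X Y"
    and closed: "\<And>s. s0 \<le> s \<Longrightarrow> s < s1 \<Longrightarrow> swapped P s \<inter> Y \<noteq> {} \<Longrightarrow> swapped P s \<subseteq> X \<union> Y"
  shows "card {s. s0 \<le> s \<and> s < s1 \<and> swap_pos P s = j \<and> between X Y (swapped P s)}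
    + card {y\<in>Y. pos s0 y \<le> j} = card {y\<in>Y. pos s1 y \<le> j}"
  using assms(1,2) closed
proof (induction s1 rule: dec_induct)
  case base
  then show ?case by simp
next
  case (step s)
  let ?E = "\<lambda>t. {s'. s0 \<le> s' \<and> s' < t \<and> swap_pos P s' = j \<and> between X Y (swapped P s')}"
  have "?E (Suc s) = (if swap_pos P s = j \<and> between X Y (swapped P s) then insert s (?E s) else ?E s)"
    using step.hyps by (auto simp: less_Suc_eq)
  moreover have "finite (?E s)" by (rule finite_subset[of _ "{..<s}"]) auto
  moreover have "card {y\<in>Y. pos (Suc s) y \<le> j} = card {y\<in>Y. pos s y \<le> j}
      + (if swap_pos P s = j \<and> between X Y (swapped P s) then 1 else 0)"
    using step assms(3-5) by (intro card_prefix_Suc) auto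
  ultimately show ?case using step by simp
qed

lemma card_swaps_in_phase:
  assumes "s0 \<le> s1" "s1 \<le> N" "Y \<subseteq> S" "X \<inter> Y = {}" "precedes 0 X Y"
    and "\<And>s. s0 \<le> s \<Longrightarrow> s < s1 \<Longrightarrow> swapped P s \<inter> Y \<noteq> {} \<Longrightarrow> swapped P s \<subseteq> X \<union> Y"
    and "pos s0 ` Y = {lo0..<hi0}" "pos s1 ` Y = {lo1..<hi1}"
  shows "card {s. s0 \<le> s \<and> s < s1 \<and> swap_pos P s = j \<and> between X Y (swapped P s)}
    = (min hi1 (Suc j) - lo1) - (min hi0 (Suc j) - lo0)"
  using card_prefix_phase[OF assms(1-6), of j] card_pos_le[OF _ assms(3,7), of j]
    card_pos_le[OF assms(2,3,8), of j] assms(1,2) by (simp del: diff_diff_left) linarith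

lemma swapped_subset_if_not_between:
  assumes "s < N" "S \<subseteq> X \<union> Y \<union> Z" "\<not> between Z Y (swapped P s)" "swapped P s \<inter> Y \<noteq> {}"
  shows "swapped P s \<subseteq> X \<union> Y"
proof -
  obtain u v where sw: "swapped P s = {u, v}" "u \<in> S" "v \<in> S"
    using swapped_elems[OF assms(1)] by (simp add: swapped_def)
  with assms(2-4) show ?thesis by (auto simp: between_def insert_commute)
qed

definition first_swap :: "('a set \<Rightarrow> bool) \<Rightarrow> nat" where
  "first_swap Q = Min (insert N {s. s < N \<and> Q (swapped P s)})"

lemma first_swap_cases: "first_swap Q = N \<or> first_swap Q < N \<and> Q (swapped P (first_swap Q))"
proof -
  have "first_swap Q \<in> insert N {s. s < N \<and> Q (swapped P s)}"
    unfolding first_swap_def by (rule Min_in) auto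
  then show ?thesis by auto
qed

lemma first_swap_le: "s < N \<Longrightarrow> Q (swapped P s) \<Longrightarrow> first_swap Q \<le> s"
  unfolding first_swap_def by (rule Min_le) auto

lemma first_swap_le_N: "first_swap Q \<le> N"
  using first_swap_cases[of Q] by auto

lemma less_first_swap:
  assumes "s < N" "\<And>t. t < N \<Longrightarrow> Q (swapped P t) \<Longrightarrow> s < t"
  shows "s < first_swap Q"
  using first_swap_cases[of Q] assms by auto

end

text \<open>The concrete initial permutation of a 3-decomposition enters only through the block order
  \<open>initial_order\<close>.\<close>
locale three_decomposition = half_period_seq P n N for P :: "'a list list" and n N :: nat +
  fixes A B C :: "'a set" and m :: nat
  assumes classes: "S = A \<union> B \<union> C"
    and disjoint: "A \<inter> B = {}" "A \<inter> C = {}" "B \<inter> C = {}"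
    and card_classes: "card A = m" "card B = m" "card C = m"
    and initial_order: "precedes 0 A B" "precedes 0 A C" "precedes 0 B C"
    and AB_before_C: "\<And>s t. s < N \<Longrightarrow> t < N \<Longrightarrow> between A B (swapped P s) \<Longrightarrow>
      between C (A \<union> B) (swapped P t) \<Longrightarrow> s < t"
    and AC_before_BC: "\<And>s t. s < N \<Longrightarrow> t < N \<Longrightarrow> between A C (swapped P s) \<Longrightarrow>
      between B C (swapped P t) \<Longrightarrow> s < t"
begin

abbreviation "AC_start \<equiv> first_swap (between C (A \<union> B))"
abbreviation "BC_start \<equiv> first_swap (between B C)"

lemma n_eq: "n = 3 * m"
proof -
  have "finite A" "finite B" "finite C" using classes finite_set[of "P ! 0"] by (metis finite_Un)+
  then show ?thesis
    using card_S classes disjoint card_classes by (simp add: card_Un_disjoint Int_Un_distrib2)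
qed

lemma AB_swap_before: "s < N \<Longrightarrow> between A B (swapped P s) \<Longrightarrow> s < AC_start"
  using AB_before_C by (intro less_first_swap) auto

lemma AC_swap_within:
  assumes "s < N" "between A C (swapped P s)"
  shows "AC_start \<le> s" "s < BC_start"
proof -
  have "between C (A \<union> B) (swapped P s)"
    using assms(2) by (rule between_commute_subset) simp
  then show "AC_start \<le> s" using first_swap_le assms(1) by blast
  show "s < BC_start" using AC_before_BC assms by (intro less_first_swap) auto
qed

lemma BC_swap_after: "s < N \<Longrightarrow> between B C (swapped P s) \<Longrightarrow> BC_start \<le> s"
  by (rule first_swap_le)

lemma AC_start_le_BC_start: "AC_start \<le> BC_start"
proof -
  have "between C (A \<union> B) (swapped P BC_start)" if "between B C (swapped P BC_start)"
    using that by (rule between_commute_subset) simp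
  then show ?thesis
    using first_swap_cases[of "between B C"] first_swap_le first_swap_le_N by metis
qed

lemma class_subsets: "A \<subseteq> S" "B \<subseteq> S" "C \<subseteq> S"
  using classes by auto

lemma layout_initial: "pos 0 ` B = {m..<2 * m}" "pos 0 ` C = {2 * m..<n}"
  using pos_image_blocks[of 0 A B C] classes disjoint initial_order card_classes
  by (simp_all add: mult_2)

lemma layout_AC_start: "pos AC_start ` B = {0..<m}" "pos AC_start ` C = {2 * m..<n}"
proof -
  have "precedes AC_start B A"
    by (rule precedes_after_swaps[OF first_swap_le_N class_subsets(1,2) disjoint(1)
          initial_order(1) AB_swap_before])
  moreover have "precedes AC_start B C"
    by (rule precedes_before_swaps[OF first_swap_le_N class_subsets(2,3) disjoint(3) initial_order(3)])
      (meson BC_swap_after AC_start_le_BC_start order.trans)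
  moreover have "precedes AC_start A C"
    by (rule precedes_before_swaps[OF first_swap_le_N class_subsets(1,3) disjoint(2)
          initial_order(2) AC_swap_within(1)])
  moreover have "S = B \<union> A \<union> C" "B \<inter> A = {}" using classes disjoint by auto
  ultimately show "pos AC_start ` B = {0..<m}" "pos AC_start ` C = {2 * m..<n}"
    using pos_image_blocks[OF first_swap_le_N, of B A C] disjoint card_classes
    by (simp_all add: mult_2)
qed

lemma layout_BC_start: "pos BC_start ` C = {m..<2 * m}"
proof -
  have "precedes BC_start B C"
    by (rule precedes_before_swaps[OF first_swap_le_N class_subsets(2,3) disjoint(3)
          initial_order(3) BC_swap_after])
  moreover have "precedes BC_start B A"
    by (rule precedes_after_swaps[OF first_swap_le_N class_subsets(1,2) disjoint(1) initial_order(1)])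
      (meson AB_swap_before AC_start_le_BC_start order.strict_trans2)
  moreover have "precedes BC_start C A"
    by (rule precedes_after_swaps[OF first_swap_le_N class_subsets(1,3) disjoint(2)
          initial_order(2) AC_swap_within(2)])
  moreover have "S = B \<union> C \<union> A" "C \<inter> A = {}" "B \<inter> A = {}" using classes disjoint by auto
  ultimately show ?thesis
    using pos_image_blocks[OF first_swap_le_N, of B C A] disjoint card_classes
    by (simp add: mult_2)
qed

lemma layout_final: "pos N ` C = {0..<m}"
proof -
  have "precedes N C B"
    by (rule precedes_after_swaps[OF order.refl class_subsets(2,3) disjoint(3) initial_order(3)])
  moreover have "precedes N C A"
    by (rule precedes_after_swaps[OF order.refl class_subsets(1,3) disjoint(2) initial_order(2)])
  moreover have "precedes N B A"
    by (rule precedes_after_swaps[OF order.refl class_subsets(1,2) disjoint(1) initial_order(1)])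
  moreover have "S = C \<union> B \<union> A" "C \<inter> B = {}" "C \<inter> A = {}" "B \<inter> A = {}"
    using classes disjoint by auto
  ultimately show ?thesis
    using pos_image_blocks[of N C B A] card_classes by simp
qed

lemma card_AB_swaps:
  assumes "m \<le> Suc j" "Suc j \<le> 2 * m"
  shows "card {s. s < N \<and> swap_pos P s = j \<and> between A B (swapped P s)} = 2 * m - Suc j"
proof -
  have "AC_start \<le> N" by (rule first_swap_le_N)
  have closed: "swapped P s \<subseteq> A \<union> B"
    if "0 \<le> s" "s < AC_start" "swapped P s \<inter> B \<noteq> {}" for s
  proof (rule swapped_subset_if_not_between[of s A B C])
    show "s < N" using that \<open>AC_start \<le> N\<close> by simp
    show "\<not> between C B (swapped P s)"
    proof
      assume "between C B (swapped P s)"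
      then have "between C (A \<union> B) (swapped P s)"
        by (meson between_commute_subset order.refl Un_upper2)
      then show False using first_swap_le \<open>s < N\<close> that(2) by fastforce
    qed
  qed (use classes that in auto)
  have "{s. 0 \<le> s \<and> s < AC_start \<and> swap_pos P s = j \<and> between A B (swapped P s)}
      = {s. s < N \<and> swap_pos P s = j \<and> between A B (swapped P s)}"
    using \<open>AC_start \<le> N\<close> AB_swap_before by auto
  then show ?thesis
    using card_swaps_in_phase[OF _ first_swap_le_N class_subsets(2) disjoint(1) initial_order(1)
        closed layout_initial(1) layout_AC_start(1), of j] assms
    by simp
qed

lemma card_AC_swaps:
  assumes "m \<le> Suc j" "Suc j \<le> 2 * m"
  shows "card {s. s < N \<and> swap_pos P s = j \<and> between A C (swapped P s)} = Suc j - m"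
proof -
  have "BC_start \<le> N" by (rule first_swap_le_N)
  have closed: "swapped P s \<subseteq> A \<union> C"
    if "AC_start \<le> s" "s < BC_start" "swapped P s \<inter> C \<noteq> {}" for s
  proof (rule swapped_subset_if_not_between[of s A C B])
    show "s < N" using that \<open>BC_start \<le> N\<close> by simp
    show "\<not> between B C (swapped P s)" using BC_swap_after \<open>s < N\<close> that(2) by fastforce
  qed (use classes that in auto)
  have "{s. AC_start \<le> s \<and> s < BC_start \<and> swap_pos P s = j \<and> between A C (swapped P s)}
      = {s. s < N \<and> swap_pos P s = j \<and> between A C (swapped P s)}"
    using \<open>BC_start \<le> N\<close> AC_swap_within by auto
  then show ?thesis
    using card_swaps_in_phase[OF AC_start_le_BC_start first_swap_le_N class_subsets(3) disjoint(2)
        initial_order(2) closed layout_AC_start(2) layout_BC_start, of j] assms n_eq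
    by simp
qed

lemma card_BC_swaps:
  assumes "m \<le> Suc j" "Suc j \<le> 2 * m"
  shows "card {s. s < N \<and> swap_pos P s = j \<and> between B C (swapped P s)} = 2 * m - Suc j"
proof -
  have closed: "swapped P s \<subseteq> B \<union> C"
    if "BC_start \<le> s" "s < N" "swapped P s \<inter> C \<noteq> {}" for s
  proof (rule swapped_subset_if_not_between[of s B C A])
    show "\<not> between A C (swapped P s)" using AC_swap_within(2) that by fastforce
  qed (use classes that in auto)
  have "{s. BC_start \<le> s \<and> s < N \<and> swap_pos P s = j \<and> between B C (swapped P s)}
      = {s. s < N \<and> swap_pos P s = j \<and> between B C (swapped P s)}"
    using BC_swap_after by auto
  then show ?thesis
    using card_swaps_in_phase[OF first_swap_le_N order.refl class_subsets(3) disjoint(3)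
        initial_order(3) closed layout_BC_start layout_final, of j] assms
    by simp
qed

lemma card_bichromatic_swaps:
  assumes "m \<le> Suc j" "Suc j \<le> 2 * m"
  shows "card {s. s < N \<and> swap_pos P s = j \<and> bichromatic A B C (swapped P s)} = n - Suc j"
proof -
  define E where "E X Y = {s. s < N \<and> swap_pos P s = j \<and> between X Y (swapped P s)}" for X Y
  have "bichromatic A B C (swapped P s) \<longleftrightarrow> between A B (swapped P s) \<or>
      between A C (swapped P s) \<or> between B C (swapped P s)" if "s < N" for s
    using bichromatic_pair_iff[OF disjoint] swapped_elems[OF that] classes
    by (simp add: swapped_def)
  then have "{s. s < N \<and> swap_pos P s = j \<and> bichromatic A B C (swapped P s)}
      = (E A B \<union> E A C) \<union> E B C"
    by (auto simp: E_def)
  moreover have "finite (E X Y)" for X Y by (rule finite_subset[of _ "{..<N}"]) (auto simp: E_def)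
  moreover have "E A B \<inter> E A C = {}" "(E A B \<union> E A C) \<inter> E B C = {}"
    using between_exclusive[OF disjoint] by (auto simp: E_def)
  ultimately show ?thesis
    using card_AB_swaps[OF assms] card_AC_swaps[OF assms] card_BC_swaps[OF assms] assms n_eq
    by (simp add: card_Un_disjoint E_def)
qed

end

lemma half_period_seq_if_half_period:
  assumes "half_period n P"
  shows "half_period_seq P n (n choose 2)"
proof
  have perms: "\<forall>\<pi>\<in>set P. distinct \<pi> \<and> length \<pi> = n" and len: "length P = Suc (n choose 2)"
    using assms by (simp_all add: half_period_def)
  show "length P = Suc (n choose 2)" by (fact len)
  fix s assume "s \<le> n choose 2"
  then have "P ! s \<in> set P" using len by simp
  then show "distinct (P ! s)" "length (P ! s) = n" using perms by simp_all
qed (use assms in \<open>simp_all add: half_period_def\<close>)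

lemma three_decomposition_if_three_decomposable:
  assumes "three_decomposable n P A B C"
  shows "three_decomposition P n (n choose 2) A B C (n div 3)"
proof -
  define m where "m = n div 3"
  obtain a b c :: "nat \<Rightarrow> 'a" where abc: "A = a ` {1..m}" "B = b ` {1..m}" "C = c ` {1..m}"
    and P0: "P ! 0 = rev (map a [1..<m + 1]) @ map b [1..<m + 1] @ map c [1..<m + 1]"
    using assms unfolding three_decomposable_def m_def by blast
  interpret half_period_seq P n "n choose 2"
    using assms by (intro half_period_seq_if_half_period) (use three_decomposable_def in blast)
  define xs ys zs where "xs = rev (map a [1..<m + 1])" and "ys = map b [1..<m + 1]"
    and "zs = map c [1..<m + 1]"
  have sets: "set xs = A" "set ys = B" "set zs = C"
    by (auto simp: abc xs_def ys_def zs_def atLeastLessThanSuc_atLeastAtMost)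
  have lens: "length xs = m" "length ys = m" "length zs = m" by (simp_all add: xs_def ys_def zs_def)
  have P0: "P ! 0 = xs @ ys @ zs" by (simp add: P0 xs_def ys_def zs_def)
  then have "distinct (xs @ ys @ zs)" using distinct_perm[of 0] by simp
  then have dist: "distinct xs" "distinct ys" "distinct zs" "A \<inter> B = {}" "A \<inter> C = {}" "B \<inter> C = {}"
    using sets by auto
  have "precedes 0 A B" "precedes 0 A C" "precedes 0 B C"
    using pos_append_left[OF P0] pos_append_right[OF P0] pos_append_left[of "xs @ ys" zs]
      pos_append_right[of "xs @ ys" zs] P0 sets lens
    by (fastforce simp: precedes_def)+
  moreover have "card A = m" "card B = m" "card C = m"
    using distinct_card[of xs] distinct_card[of ys] distinct_card[of zs] dist sets lens by simp_all
  moreover have "S = A \<union> B \<union> C" using P0 sets by auto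
  moreover have "\<And>s t. s < n choose 2 \<Longrightarrow> t < n choose 2 \<Longrightarrow> between A B (swapped P s) \<Longrightarrow>
      between C (A \<union> B) (swapped P t) \<Longrightarrow> s < t"
    "\<And>s t. s < n choose 2 \<Longrightarrow> t < n choose 2 \<Longrightarrow> between A C (swapped P s) \<Longrightarrow>
      between B C (swapped P t) \<Longrightarrow> s < t"
    using assms unfolding three_decomposable_def by blast+
  ultimately show ?thesis
    unfolding m_def[symmetric]
    by (intro three_decomposition.intro three_decomposition_axioms.intro half_period_seq_axioms dist)
qed

theorem N_bi_three_decomposable:
  assumes "three_decomposable n P A B C" "n div 3 \<le> k" "2 * k < n"
  shows "N_bi n k P A B C = n"
proof -
  interpret three_decomposition P n "n choose 2" A B C "n div 3"
    using assms(1) by (rule three_decomposition_if_three_decomposable)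
  define F where "F j = {s. s < n choose 2 \<and> swap_pos P s = j \<and> bichromatic A B C (swapped P s)}"
    for j
  have k: "1 \<le> k" "n div 3 \<le> k" "k \<le> 2 * (n div 3)" "2 * k < n" using assms(2,3) n_eq by linarith+
  have "critical n k P s \<longleftrightarrow> swap_pos P s = k - 1 \<or> swap_pos P s = n - k - 1" for s
    using k by (auto simp: critical_def)
  then have "{s. s < n choose 2 \<and> critical n k P s \<and> bichromatic A B C (swapped P s)}
      = F (k - 1) \<union> F (n - k - 1)"
    by (auto simp: F_def)
  moreover have "finite (F j)" for j by (rule finite_subset[of _ "{..<n choose 2}"]) (auto simp: F_def)
  moreover have "F (k - 1) \<inter> F (n - k - 1) = {}" using k by (auto simp: F_def)
  moreover have "card (F (k - 1)) = n - k" "card (F (n - k - 1)) = k"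
    using card_bichromatic_swaps[of "k - 1"] card_bichromatic_swaps[of "n - k - 1"] k n_eq
    by (simp_all add: F_def)
  ultimately show ?thesis using k by (simp add: N_bi_def card_Un_disjoint)
qed

theorem corollary2:
  fixes P :: "'a list list" and A B C :: "'a set"
  assumes "three_decomposable 30 P A B C"
  shows "\<forall>k \<in> {11, 12, 13, 14}. N_bi 30 k P A B C = 30"
  using N_bi_three_decomposable[OF assms] by simp

end
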